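(* Let $X$ be a compact Hausdorff space and let $\rho\colon X\times X\to[0,\infty]$ be a function continuous with respect to the upper topology on $[0,\infty]$ such that for all $x,y\in X$, $$\rho(x,y)=\inf_{z\in X}\big(\rho(x,z)+\rho(z,y)\big).$$ Let $A=\{x\in X\mid\rho(x,x)=0\}$. Then for all $x,y\in X$, $$\rho(x,y)=\inf_{a\in A}\big(\rho(x,a)+\rho(a,y)\big).$$
   Context: The upper topology on $[0,\infty]$ is the topology whose nonempty proper open sets are the sets $]u,\infty]$ for $u\in[0,\infty]$; continuity into it means lower semicontinuity. The infimum of the empty set is $\infty$. *)

theory Defs
  imports "HOL-Analysis.Analysis"
begin

text \<open>The upper topology on [0,\<infinity>] (type ennreal): open sets are the empty set,
  the whole space, and the sets ]u,\<infinity>] for u in [0,\<infinity>].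
  Note that the empty set is ]\<infinity>,\<infinity>].\<close>

definition upper_open :: "ennreal set \<Rightarrow> bool" where
  "upper_open S \<longleftrightarrow> S = UNIV \<or> (\<exists>u. S = {u<..})"

lemma istopology_upper_open: "istopology upper_open"
  unfolding istopology_def
proof (intro conjI allI impI)
  fix S T assume "upper_open S" "upper_open T"
  then show "upper_open (S \<inter> T)"
    unfolding upper_open_def
  proof (elim disjE exE)
    fix u v assume "S = {u<..}" "T = {v<..}"
    then have "S \<inter> T = {max u v<..}" by auto
    then show "S \<inter> T = UNIV \<or> (\<exists>u. S \<inter> T = {u<..})" by blast
  qed auto
next
  fix K assume K: "\<forall>S\<in>K. upper_open S"
  show "upper_open (\<Union>K)"
  proof (cases "UNIV \<in> K")
    case True then show ?thesis unfolding upper_open_def by auto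
  next
    case False
    define U where "U = {u. {u<..} \<in> K}"
    have "\<Union>K = {Inf U<..}"
    proof (intro set_eqI iffI)
      fix x assume "x \<in> \<Union>K"
      then obtain S where "S \<in> K" "x \<in> S" by auto
      with K False obtain u where "S = {u<..}" unfolding upper_open_def by auto
      then have "u \<in> U" "u < x" using \<open>S \<in> K\<close> \<open>x \<in> S\<close> by (auto simp: U_def)
      then show "x \<in> {Inf U<..}" by (meson Inf_lower greaterThan_iff le_less_trans)
    next
      fix x assume "x \<in> {Inf U<..}"
      then obtain u where "u \<in> U" "u < x" by (auto simp: Inf_less_iff)
      then show "x \<in> \<Union>K" by (auto simp: U_def)
    qed
    then show ?thesis unfolding upper_open_def by auto
  qed
qed

definition upper_topology :: "ennreal topology" where
  "upper_topology = topology upper_open"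

lemma openin_upper_topology: "openin upper_topology S \<longleftrightarrow> upper_open S"
  unfolding upper_topology_def using istopology_upper_open by simp

end

theory Submission
  imports Defs
begin

text \<open>Fix \<open>x, y\<close> with \<open>\<rho> x y < \<infinity>\<close>. On a compact space a lower semicontinuous function attains
  its infimum on every nonempty closed set, so the hypothesis yields exact midpoints, and among
  the midpoints \<open>z\<close> of \<open>(x, y)\<close> (those with \<open>\<rho> x z + \<rho> z y \<le> \<rho> x y\<close>) the ones minimising
  \<open>\<rho> x z\<close> form a nonempty closed set \<open>K\<close>. For \<open>z \<in> K\<close>, a midpoint \<open>w\<close> of \<open>(x, z)\<close> lies
  again in \<open>K\<close>, and minimality forces \<open>\<rho> w z = 0\<close>. Iterating gives a sequence in \<open>K\<close> with
  \<open>\<rho> (z k) (z n) = 0\<close> for \<open>n < k\<close>; by lower semicontinuity every cluster point \<open>a\<close> of it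
  lies in \<open>K\<close> and has \<open>\<rho> a a = 0\<close>.\<close>

lemma topspace_upper_topology [simp]: "topspace upper_topology = UNIV"
  by (metis openin_subset openin_upper_topology upper_open_def top.extremum_uniqueI)

lemma continuous_map_upper_topology:
  "continuous_map X upper_topology f \<longleftrightarrow> (\<forall>c. openin X {x \<in> topspace X. c < f x})"
proof -
  have "continuous_map X upper_topology f \<longleftrightarrow>
      (\<forall>U. upper_open U \<longrightarrow> openin X {x \<in> topspace X. f x \<in> U})"
    by (simp add: continuous_map_def openin_upper_topology)
  also have "\<dots> \<longleftrightarrow> (\<forall>c. openin X {x \<in> topspace X. f x \<in> {c<..}})"
  proof (intro iffI allI impI)
    fix c
    assume "\<forall>U. upper_open U \<longrightarrow> openin X {x \<in> topspace X. f x \<in> U}"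
    then show "openin X {x \<in> topspace X. f x \<in> {c<..}}"
      unfolding upper_open_def by blast
  next
    fix U
    assume "\<forall>c. openin X {x \<in> topspace X. f x \<in> {c<..}}" "upper_open U"
    then show "openin X {x \<in> topspace X. f x \<in> U}"
      unfolding upper_open_def by auto
  qed
  finally show ?thesis
    by simp
qed

lemma closedin_upper_sublevel:
  assumes "continuous_map X upper_topology f"
  shows "closedin X {x \<in> topspace X. f x \<le> c}"
proof -
  have "topspace X - {x \<in> topspace X. f x \<le> c} = {x \<in> topspace X. c < f x}"
    by auto
  with assms show ?thesis
    unfolding continuous_map_upper_topology closedin_def by auto
qed

lemma ennreal_less_add_witnesses:
  fixes c p q :: ennreal
  assumes "c < p + q" "\<not> c < p" "\<not> c < q"
  shows "\<exists>a b. a < p \<and> b < q \<and> c \<le> a + b"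
proof -
  have "c < \<infinity>"
    using less_le_trans[OF assms(1) top_greatest] by simp
  then obtain c' p' q' where c: "c = ennreal c'" "c' \<ge> 0" and p: "p = ennreal p'" "p' \<ge> 0"
    and q: "q = ennreal q'" "q' \<ge> 0"
    using assms(2,3) by (cases c; cases p; cases q) (auto simp: not_less)
  have h: "c' < p' + q'" "p' \<le> c'" "q' \<le> c'"
    using assms c p q by (auto simp: ennreal_plus[symmetric] ennreal_less_iff simp del: ennreal_plus)
  define d where "d = p' + q' - c'"
  have d: "0 < d" "d \<le> p'" "d \<le> q'"
    using h by (auto simp: d_def)
  have "ennreal (p' - d/2) < p" "ennreal (q' - d/2) < q"
    using d p q by (simp_all add: ennreal_less_iff)
  moreover have "c \<le> ennreal (p' - d/2) + ennreal (q' - d/2)"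
    using d c by (simp add: ennreal_plus[symmetric] d_def del: ennreal_plus)
  ultimately show ?thesis
    by blast
qed

lemma continuous_map_upper_topology_add:
  assumes f: "continuous_map X upper_topology f" and g: "continuous_map X upper_topology g"
  shows "continuous_map X upper_topology (\<lambda>x. f x + g x)"
  unfolding continuous_map_upper_topology
proof (intro allI openin_subopen[THEN iffD2] ballI)
  fix c x
  let ?S = "{x \<in> topspace X. c < f x + g x}"
  assume x: "x \<in> ?S"
  have f_open: "openin X {x \<in> topspace X. a < f x}" and g_open: "openin X {x \<in> topspace X. a < g x}"
    for a
    using f g by (simp_all add: continuous_map_upper_topology)
  consider "c < f x" | "c < g x" | a b where "a < f x" "b < g x" "c \<le> a + b"
    using ennreal_less_add_witnesses x by blast
  then show "\<exists>T. openin X T \<and> x \<in> T \<and> T \<subseteq> ?S"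
  proof cases
    case 1
    then show ?thesis
      using x f_open by (intro exI[of _ "{x \<in> topspace X. c < f x}"])
        (auto intro: less_le_trans[OF _ add_increasing2[OF zero_le]])
  next
    case 2
    then show ?thesis
      using x g_open by (intro exI[of _ "{x \<in> topspace X. c < g x}"])
        (auto intro: less_le_trans[OF _ add_increasing[OF zero_le]])
  next
    case (3 a b)
    then show ?thesis
      using x f_open g_open
      by (intro exI[of _ "{x \<in> topspace X. a < f x} \<inter> {x \<in> topspace X. b < g x}"])
        (auto intro: le_less_trans[OF _ add_strict_mono])
  qed
qed

lemma continuous_map_upper_topology_attains_min:
  assumes X: "compact_space X" and f: "continuous_map X upper_topology f"
    and K: "closedin X K" "K \<noteq> {}"
  shows "\<exists>z\<in>K. \<forall>w\<in>K. f z \<le> f w"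
proof (rule ccontr)
  assume no_min: "\<not> ?thesis"
  define m where "m = (INF w\<in>K. f w)"
  have below: "m < f z" if "z \<in> K" for z
    using no_min that unfolding m_def by (meson INF_lower le_less_trans not_le)
  let ?U = "(\<lambda>u. {x \<in> topspace X. u < f x}) ` {m<..}"
  have "compactin X K"
    using X K(1) by (rule closedin_compact_space)
  moreover have "\<forall>U\<in>?U. openin X U"
    using f by (auto simp: continuous_map_upper_topology)
  moreover have "K \<subseteq> \<Union>?U"
  proof
    fix z assume "z \<in> K"
    then obtain u where "m < u" "u < f z"
      using below dense by blast
    then show "z \<in> \<Union>?U"
      using \<open>z \<in> K\<close> closedin_subset[OF K(1)] by auto
  qed
  ultimately obtain F where F: "finite F" "F \<subseteq> ?U" "K \<subseteq> \<Union>F"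
    unfolding compactin_def by meson
  then obtain N where N: "finite N" "N \<subseteq> {m<..}" "F = (\<lambda>u. {x \<in> topspace X. u < f x}) ` N"
    using finite_subset_image[OF F(1,2)] by blast
  then have "N \<noteq> {}"
    using F(3) K(2) by auto
  have "Min N \<le> f z" if z: "z \<in> K" for z
  proof -
    obtain u where "u \<in> N" "u < f z"
      using F(3) N(3) z by auto
    then show ?thesis
      using N(1) by (meson Min_le less_imp_le order_trans)
  qed
  then have "Min N \<le> m"
    unfolding m_def by (rule INF_greatest)
  moreover have "m < Min N"
    using N(1,2) \<open>N \<noteq> {}\<close> by auto
  ultimately show False
    by simp
qed

locale compact_lsc_cost =
  fixes X :: "'a topology" and \<rho> :: "'a \<Rightarrow> 'a \<Rightarrow> ennreal"
  assumes compact: "compact_space X"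
    and lsc: "continuous_map (prod_topology X X) upper_topology (\<lambda>(x, y). \<rho> x y)"
begin

lemma continuous_map_cost_left:
  assumes "y \<in> topspace X"
  shows "continuous_map X upper_topology (\<lambda>x. \<rho> x y)"
proof -
  have "continuous_map X (prod_topology X X) (\<lambda>x. (x, y))"
    using assms by (simp add: continuous_map_paired)
  from continuous_map_compose[OF this lsc] show ?thesis
    by (simp add: o_def)
qed

lemma continuous_map_cost_right:
  assumes "x \<in> topspace X"
  shows "continuous_map X upper_topology (\<lambda>y. \<rho> x y)"
proof -
  have "continuous_map X (prod_topology X X) (\<lambda>y. (x, y))"
    using assms by (simp add: continuous_map_paired)
  from continuous_map_compose[OF this lsc] show ?thesis
    by (simp add: o_def)
qed

lemma exists_null_loop:
  assumes K: "closedin X K" "K \<noteq> {}"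
    and null_trans: "\<And>a b c. a \<in> K \<Longrightarrow> b \<in> K \<Longrightarrow> c \<in> K \<Longrightarrow> \<rho> a b = 0 \<Longrightarrow> \<rho> b c = 0 \<Longrightarrow> \<rho> a c = 0"
    and null_pred: "\<And>z. z \<in> K \<Longrightarrow> \<exists>w\<in>K. \<rho> w z = 0"
  shows "\<exists>a\<in>K. \<rho> a a = 0"
proof -
  obtain P where P: "\<And>z. z \<in> K \<Longrightarrow> P z \<in> K \<and> \<rho> (P z) z = 0"
    using null_pred by metis
  obtain z0 where "z0 \<in> K"
    using K(2) by blast
  define zs where "zs n = (P ^^ n) z0" for n
  have zs_K: "zs n \<in> K" for n
    by (induction n) (simp_all add: zs_def \<open>z0 \<in> K\<close> P)
  have zs_topspace: "zs n \<in> topspace X" for n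
    using zs_K closedin_subset[OF K(1)] by blast
  have zs_null: "\<rho> (zs k) (zs n) = 0" if "Suc n \<le> k" for n k
    using that
  proof (induction k rule: dec_induct)
    case base
    then show ?case
      using P zs_K by (simp add: zs_def)
  next
    case (step k)
    moreover have "\<rho> (zs (Suc k)) (zs k) = 0"
      using P zs_K by (simp add: zs_def)
    ultimately show ?case
      using null_trans zs_K by blast
  qed
  define C where "C n = X closure_of (zs ` {n<..})" for n
  have "(\<Inter>n. C n) \<noteq> {}"
  proof (rule compact_space_imp_nest[OF compact])
    show "closedin X (C n)" for n
      by (simp add: C_def)
    show "C n \<noteq> {}" for n
      using zs_topspace by (auto simp: C_def closure_of_eq_empty image_subset_iff)
    show "decseq C"
      unfolding decseq_def C_def by (auto intro!: closure_of_mono image_mono)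
  qed
  then obtain a where a: "\<And>n. a \<in> C n"
    by blast
  have a_topspace: "a \<in> topspace X"
    using a[of 0] closure_of_subset_topspace unfolding C_def by (meson subsetD)
  have a_null: "\<rho> a (zs n) = 0" for n
  proof -
    have "zs ` {n<..} \<subseteq> {w \<in> topspace X. \<rho> w (zs n) \<le> 0}"
      using zs_null zs_topspace by (auto simp: Suc_le_eq)
    then have "C n \<subseteq> {w \<in> topspace X. \<rho> w (zs n) \<le> 0}"
      unfolding C_def
      by (rule closure_of_minimal[OF _ closedin_upper_sublevel[OF continuous_map_cost_left[OF zs_topspace]]])
    with a show ?thesis
      by auto
  qed
  have "zs ` {0<..} \<subseteq> K \<inter> {w \<in> topspace X. \<rho> a w \<le> 0}"
    using a_null zs_K zs_topspace by auto
  then have "C 0 \<subseteq> K \<inter> {w \<in> topspace X. \<rho> a w \<le> 0}"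
    unfolding C_def
    by (rule closure_of_minimal[OF _ closedin_Int[OF K(1)
          closedin_upper_sublevel[OF continuous_map_cost_right[OF a_topspace]]]])
  with a show ?thesis
    by auto
qed

end

locale idempotent_lsc_cost = compact_lsc_cost +
  assumes idempotent: "\<And>x y. x \<in> topspace X \<Longrightarrow> y \<in> topspace X \<Longrightarrow>
    \<rho> x y = (INF z\<in>topspace X. \<rho> x z + \<rho> z y)"
begin

lemma triangle:
  assumes "x \<in> topspace X" "y \<in> topspace X" "z \<in> topspace X"
  shows "\<rho> x z \<le> \<rho> x y + \<rho> y z"
  using idempotent[of x z] assms by (metis INF_lower)

lemma exists_midpoint:
  assumes x: "x \<in> topspace X" and z: "z \<in> topspace X"
  shows "\<exists>y\<in>topspace X. \<rho> x y + \<rho> y z = \<rho> x z"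
proof -
  obtain y where y: "y \<in> topspace X" "\<And>w. w \<in> topspace X \<Longrightarrow> \<rho> x y + \<rho> y z \<le> \<rho> x w + \<rho> w z"
    using continuous_map_upper_topology_attains_min[OF compact
        continuous_map_upper_topology_add[OF continuous_map_cost_right[OF x] continuous_map_cost_left[OF z]]
        closedin_topspace] x
    by blast
  have "\<rho> x y + \<rho> y z \<le> \<rho> x z"
    unfolding idempotent[OF x z] using y by (simp add: le_INF_iff)
  with y(1) show ?thesis
    using triangle[OF x y(1) z] by (blast intro: antisym)
qed

lemma exists_null_loop_between:
  assumes x: "x \<in> topspace X" and y: "y \<in> topspace X" and finite: "\<rho> x y < \<infinity>"
  shows "\<exists>a\<in>topspace X. \<rho> a a = 0 \<and> \<rho> x a + \<rho> a y \<le> \<rho> x y"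
proof -
  define M where "M = {z \<in> topspace X. \<rho> x z + \<rho> z y \<le> \<rho> x y}"
  have M_closed: "closedin X M"
    unfolding M_def using closedin_upper_sublevel[OF continuous_map_upper_topology_add[OF
          continuous_map_cost_right[OF x] continuous_map_cost_left[OF y]]] .
  have "M \<noteq> {}"
    using exists_midpoint[OF x y] unfolding M_def by force
  then obtain z1 where z1: "z1 \<in> M" "\<And>w. w \<in> M \<Longrightarrow> \<rho> x z1 \<le> \<rho> x w"
    using continuous_map_upper_topology_attains_min[OF compact continuous_map_cost_right[OF x] M_closed]
    by blast
  define m where "m = \<rho> x z1"
  define K where "K = M \<inter> {z \<in> topspace X. \<rho> x z \<le> m}"
  have "m \<le> \<rho> x y"
    using z1(1) unfolding M_def m_def by (auto intro: order_trans[OF add_increasing2[OF zero_le]])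
  then have m_finite: "m \<noteq> \<infinity>"
    using finite by auto
  have K_M: "z \<in> K \<longleftrightarrow> z \<in> M \<and> \<rho> x z = m" for z
    using z1(2) M_def K_def m_def by (auto intro: antisym)
  have "\<exists>a\<in>K. \<rho> a a = 0"
  proof (rule exists_null_loop)
    show "closedin X K"
      unfolding K_def using M_closed closedin_upper_sublevel[OF continuous_map_cost_right[OF x]] ..
    show "K \<noteq> {}"
      using K_M z1(1) m_def by blast
    show "\<rho> a c = 0" if "a \<in> K" "b \<in> K" "c \<in> K" "\<rho> a b = 0" "\<rho> b c = 0" for a b c
      using triangle[of a b c] that unfolding K_def M_def by auto
  next
    fix z assume "z \<in> K"
    then have z: "z \<in> topspace X" "\<rho> x z = m" "\<rho> x z + \<rho> z y \<le> \<rho> x y"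
      using K_M unfolding M_def by auto
    obtain w where w: "w \<in> topspace X" "\<rho> x w + \<rho> w z = \<rho> x z"
      using exists_midpoint[OF x z(1)] by blast
    have "\<rho> x w + \<rho> w y \<le> \<rho> x w + (\<rho> w z + \<rho> z y)"
      using triangle[OF w(1) z(1) y] by (rule add_left_mono)
    also have "\<dots> \<le> \<rho> x y"
      using w(2) z(3) by (simp add: add.assoc[symmetric])
    finally have "w \<in> M"
      unfolding M_def using w(1) by blast
    moreover have "\<rho> x w \<le> m"
      using w(2) z(2) by (metis add_increasing2 zero_le order_refl)
    ultimately have "w \<in> K" "\<rho> x w = m"
      using z1(2) K_M unfolding m_def by (auto intro: antisym)
    moreover from this have "m + \<rho> w z = m + 0"
      using w(2) z(2) by simp
    ultimately show "\<exists>w\<in>K. \<rho> w z = 0"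
      using m_finite by (auto simp: ennreal_add_left_cancel)
  qed
  then show ?thesis
    unfolding K_def M_def by auto
qed

theorem cost_eq_INF_null_points:
  assumes x: "x \<in> topspace X" and y: "y \<in> topspace X"
  shows "\<rho> x y = (INF a\<in>{a \<in> topspace X. \<rho> a a = 0}. \<rho> x a + \<rho> a y)"
proof (rule antisym)
  show "\<rho> x y \<le> (INF a\<in>{a \<in> topspace X. \<rho> a a = 0}. \<rho> x a + \<rho> a y)"
    using triangle[OF x _ y] by (auto intro: INF_greatest)
  show "(INF a\<in>{a \<in> topspace X. \<rho> a a = 0}. \<rho> x a + \<rho> a y) \<le> \<rho> x y"
  proof (cases "\<rho> x y < \<infinity>")
    case True
    then show ?thesis
      using exists_null_loop_between[OF x y] by (auto intro: INF_lower2)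
  qed (simp add: not_less top_unique)
qed

end

theorem lemma5p13:
  fixes X :: "'a topology" and \<rho> :: "'a \<Rightarrow> 'a \<Rightarrow> ennreal"
  assumes "compact_space X" and "Hausdorff_space X"
    and "continuous_map (prod_topology X X) upper_topology (\<lambda>(x, y). \<rho> x y)"
    and "\<And>x y. x \<in> topspace X \<Longrightarrow> y \<in> topspace X \<Longrightarrow>
           \<rho> x y = (INF z\<in>topspace X. \<rho> x z + \<rho> z y)"
  shows "\<forall>x\<in>topspace X. \<forall>y\<in>topspace X.
           \<rho> x y = (INF a\<in>{a\<in>topspace X. \<rho> a a = 0}. \<rho> x a + \<rho> a y)"
proof -
  interpret idempotent_lsc_cost X \<rho>
    using assms(1,3,4) by unfold_locales
  show ?thesis
    using cost_eq_INF_null_points by blast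
qed

end
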